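(* Let $R$ be a commutative ring with $1\neq 0$, $S\subseteq R$ a multiplicatively closed subset, and $M$ a distributive $R$-module. If $N$ and $K$ are $S$-copure submodules of $M$, then $N\cap K$ is an $S$-copure submodule of $M$.
   Context: All rings are commutative with $1\neq 0$ and all modules are unital. A multiplicatively closed subset (m.c.s.) $S$ of $R$ is a subset with $0\notin S$, $1\in S$, and $ss'\in S$ for all $s,s'\in S$. $M$ is distributive if its lattice of submodules is distributive, i.e., $A\cap(B+C)=(A\cap B)+(A\cap C)$ for all submodules $A,B,C$. For an ideal $I$ and submodule $L$, $(L:_M I)=\{m\in M: Im\subseteq L\}$ and $(0:_M I)=\{m\in M: Im=0\}$. A submodule $L$ of $M$ is $S$-copure if there exists $s\in S$ such that $s(L:_M I)\subseteq L+(0:_M I)$ for every ideal $I$ of $R$. *)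

theory Defs
  imports Complex_Main
begin

text \<open>Modules over a commutative ring 'a (class comm_ring_1, so 1 \<noteq> 0) are given by
  the HOL locale module with scalar multiplication scale; submodules are module.subspace.\<close>

definition mcs :: "'a::comm_ring_1 set \<Rightarrow> bool" where
  "mcs S \<longleftrightarrow> 0 \<notin> S \<and> 1 \<in> S \<and> (\<forall>s\<in>S. \<forall>t\<in>S. s * t \<in> S)"

definition ring_ideal :: "'a::comm_ring_1 set \<Rightarrow> bool" where
  "ring_ideal I \<longleftrightarrow> 0 \<in> I \<and> (\<forall>x\<in>I. \<forall>y\<in>I. x + y \<in> I) \<and> (\<forall>r. \<forall>x\<in>I. r * x \<in> I)"

definition sub_sum :: "'b::ab_group_add set \<Rightarrow> 'b set \<Rightarrow> 'b set" where
  "sub_sum A B = {a + b | a b. a \<in> A \<and> b \<in> B}"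

definition distributive_module :: "('a::comm_ring_1 \<Rightarrow> 'b::ab_group_add \<Rightarrow> 'b) \<Rightarrow> bool" where
  "distributive_module scale \<longleftrightarrow>
     (\<forall>A B C. module.subspace scale A \<longrightarrow> module.subspace scale B \<longrightarrow> module.subspace scale C \<longrightarrow>
        A \<inter> sub_sum B C = sub_sum (A \<inter> B) (A \<inter> C))"

definition colon :: "('a::comm_ring_1 \<Rightarrow> 'b::ab_group_add \<Rightarrow> 'b) \<Rightarrow> 'b set \<Rightarrow> 'a set \<Rightarrow> 'b set" where
  "colon scale L I = {m. {scale a m | a. a \<in> I} \<subseteq> L}"

definition S_copure :: "('a::comm_ring_1 \<Rightarrow> 'b::ab_group_add \<Rightarrow> 'b) \<Rightarrow> 'a set \<Rightarrow> 'b set \<Rightarrow> bool" where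
  "S_copure scale S L \<longleftrightarrow> module.subspace scale L \<and>
     (\<exists>s\<in>S. \<forall>I. ring_ideal I \<longrightarrow>
        {scale s m | m. m \<in> colon scale L I} \<subseteq> sub_sum L (colon scale {0} I))"

end

theory Submission
  imports Defs
begin

text \<open>If s m = n + a and t m = k + b with a, b in Z = (0 :_M I), then t n = s k + (s b - t a)
  lies in N \<inter> (K + Z); distributivity splits it as c + w with c \<in> N \<inter> K and w \<in> N \<inter> Z,
  so (s t) m = t n + t a = c + (w + t a) \<in> (N \<inter> K) + Z. Taking the product of the two
  witnesses of S-copurity thus witnesses S-copurity of N \<inter> K.\<close>

lemma (in module) subspace_annihilator: "subspace (colon scale {0} I)"
proof -
  have ann: "m \<in> colon scale {0} I \<longleftrightarrow> (\<forall>a\<in>I. scale a m = 0)" for m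
    unfolding colon_def by blast
  have "scale a (x + y) = 0" if "scale a x = 0" "scale a y = 0" for a x y
    using that by (simp add: scale_right_distrib)
  moreover have "scale (a * c) x = 0" if "scale a x = 0" for a c x
    using that by (metis mult.commute scale_scale scale_zero_right)
  ultimately show ?thesis
    unfolding subspace_def by (auto simp: ann)
qed

lemma colon_inter: "colon scale (N \<inter> K) I = colon scale N I \<inter> colon scale K I"
  unfolding colon_def by auto

lemma (in module) scale_mult_mem_sub_sum_inter:
  assumes distrib: "distributive_module scale"
    and N: "subspace N" and K: "subspace K" and Z: "subspace Z"
    and sm: "scale s m \<in> sub_sum N Z" and tm: "scale t m \<in> sub_sum K Z"
  shows "scale (s * t) m \<in> sub_sum (N \<inter> K) Z"
proof -
  obtain n a where n: "n \<in> N" and a: "a \<in> Z" and sm_eq: "scale s m = n + a"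
    using sm unfolding sub_sum_def by blast
  obtain k b where k: "k \<in> K" and b: "b \<in> Z" and tm_eq: "scale t m = k + b"
    using tm unfolding sub_sum_def by blast
  have via_N: "scale (s * t) m = scale t n + scale t a"
    using sm_eq by (metis scale_scale mult.commute scale_right_distrib)
  have via_K: "scale (s * t) m = scale s k + scale s b"
    using tm_eq by (metis scale_scale scale_right_distrib)
  have ta: "scale t a \<in> Z" using Z a by (rule subspace_scale)
  have "scale t n = scale s k + (scale s b - scale t a)"
    using via_N via_K by (simp add: algebra_simps)
  moreover have "scale s k \<in> K" using K k by (rule subspace_scale)
  moreover have "scale s b - scale t a \<in> Z"
    using Z subspace_scale[OF Z b] ta by (rule subspace_diff)
  ultimately have "scale t n \<in> N \<inter> sub_sum K Z"
    using subspace_scale[OF N n] unfolding sub_sum_def by blast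
  also have "\<dots> = sub_sum (N \<inter> K) (N \<inter> Z)"
    using distrib N K Z unfolding distributive_module_def by blast
  finally obtain c w where c: "c \<in> N \<inter> K" and w: "w \<in> N \<inter> Z" and tn_eq: "scale t n = c + w"
    unfolding sub_sum_def by blast
  have "w + scale t a \<in> Z" using Z w ta by (simp add: subspace_add)
  moreover have "scale (s * t) m = c + (w + scale t a)"
    using via_N tn_eq by (simp add: algebra_simps)
  ultimately show ?thesis unfolding sub_sum_def using c by blast
qed

theorem theorem3p5:
  fixes scale :: "'a::comm_ring_1 \<Rightarrow> 'b::ab_group_add \<Rightarrow> 'b"
    and S :: "'a set" and N K :: "'b set"
  assumes "module scale"
    and "mcs S"
    and "distributive_module scale"
    and "S_copure scale S N"
    and "S_copure scale S K"
  shows "S_copure scale S (N \<inter> K)"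
proof -
  interpret module scale by fact
  obtain s where s: "s \<in> S" and N: "subspace N" and hs: "\<And>I. ring_ideal I \<Longrightarrow>
        {scale s m | m. m \<in> colon scale N I} \<subseteq> sub_sum N (colon scale {0} I)"
    using assms(4) unfolding S_copure_def by blast
  obtain t where t: "t \<in> S" and K: "subspace K" and ht: "\<And>I. ring_ideal I \<Longrightarrow>
        {scale t m | m. m \<in> colon scale K I} \<subseteq> sub_sum K (colon scale {0} I)"
    using assms(5) unfolding S_copure_def by blast
  have "s * t \<in> S" using assms(2) s t unfolding mcs_def by blast
  moreover have "{scale (s * t) m | m. m \<in> colon scale (N \<inter> K) I}
      \<subseteq> sub_sum (N \<inter> K) (colon scale {0} I)" if I: "ring_ideal I" for I
  proof clarify
    fix m assume "m \<in> colon scale (N \<inter> K) I"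
    then have "scale s m \<in> sub_sum N (colon scale {0} I)"
      and "scale t m \<in> sub_sum K (colon scale {0} I)"
      using hs[OF I] ht[OF I] by (auto simp: colon_inter)
    then show "scale (s * t) m \<in> sub_sum (N \<inter> K) (colon scale {0} I)"
      by (rule scale_mult_mem_sub_sum_inter[OF assms(3) N K subspace_annihilator])
  qed
  moreover have "subspace (N \<inter> K)" using N K by (rule subspace_inter)
  ultimately show ?thesis unfolding S_copure_def by blast
qed

end
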